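(* Let $f^{cl}_{\pi_\star}$ be $\eta$-locally $\delta$-ISS for some $\eta>0$, with gain $\gamma$ satisfying $\gamma(x)\le O(x^{1/r})$ as $x\to0^+$ for some $r\ge1$. Fix a test policy $\pi$ and $\xi\in\mathcal X$, and let $p=r\in\mathbb N$. Assume $\pi,\pi_\star$ are $p$-times continuously differentiable with $\|\bar\pi(x)-\sum_{j=0}^p\frac1{j!}\partial_x^j\bar\pi(x_0)(x-x_0)^{\otimes j}\|\le\frac{L_{\partial^p\pi}}{(p+1)!}\|x-x_0\|^{p+1}$ for all $x,x_0$ and $\bar\pi\in\{\pi,\pi_\star\}$. Choose $\mu,\alpha>0$, $\alpha\le1/2$, with \[2\tfrac{L_{\partial^p\pi}}{(p+1)!}x^{p+1}+(x/\mu)^p\le\gamma^{-1}(x)\quad\text{for all }0\le x\le\alpha.\] If \[\max_{0\le t\le T-1}\max_{0\le j\le p-1}\mu\Big(\tfrac{4}{j!}\|\partial_x^j\Delta_t^{\pi_\star}(\xi;\pi)\|\Big)^{1/p}\le\alpha,\] \[\max_{0\le t\le T-1}\max_{0\le j\le p-1}\Big[\tfrac{2L_{\partial^p\pi}\mu^{p+1}}{(p+1)!}\Big(\tfrac{4}{j!}\|\partial_x^j\Delta_t^{\pi_\star}(\xi;\pi)\|\Big)^{\frac{p+1}{p}}+\tfrac4{j!}\|\partial_x^j\Delta_t^{\pi_\star}(\xi;\pi)\|\Big]\le\eta,\] and $\|\partial_x^p\Delta_t^{\pi_\star}(\xi;\pi)\|\le\frac{p!}{2\mu^p}$ for all $0\le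 t\le T-1$, then for all $1\le t\le T$, \[\|x_t^{\pi_\star}(\xi)-x_t^\pi(\xi)\|\le\max_{0\le k\le t-1}\max_{0\le j\le p-1}\mu\Big(\tfrac4{j!}\Big)^{1/r}\|\partial_x^j\Delta_k^{\pi_\star}(\xi;\pi)\|^{1/r}.\]
   Context: Dynamics $x_{t+1}=f(x_t,u_t)$, $x_0=\xi$. For a policy $\pi$, $f^{cl}_\pi(x,\Delta):=f(x,\pi(x)+\Delta)$; $x_t^\pi(\xi,\{\Delta_s\})$ is the state at time $t$, $x_t^\pi(\xi):=x_t^\pi(\xi,\{0\})$. Initial conditions lie in compact $\mathcal X$. Norms: Euclidean/operator norm. $f^{cl}_\pi$ is $\eta$-locally $\delta$-ISS if there are class $\mathcal{KL}$ $\beta$ and class $\mathcal K$ $\gamma$ with $\|x_t^\pi(\xi_1;\{\Delta_s\}_{s=0}^{t-1})-x_t^\pi(\xi_2;\{0\})\|\le\beta(\|\xi_1-\xi_2\|,t)+\gamma(\max_{0\le k\le t-1}\|\Delta_k\|)$ for all $\xi_1,\xi_2\in\mathcal X$, $t$, and perturbations with $\sup_t\|\Delta_t\|\le\eta$. $\gamma^{-1}$ is the inverse on the range of $\gamma$ ($+\infty$ beyond it). $\partial_x^j\Delta_t^{\pi_\star}(\xi;\pi):=\partial_x^j\pi(x_t^{\pi_\star}(\xi))-\partial_x^j\pi_\star(x_t^{\pi_\star}(\xi))$ for expert policy $\pi_\star$. *)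

theory Defs
  imports "HOL-Analysis.Analysis"
begin

primrec traj :: "('x \<Rightarrow> 'u \<Rightarrow> 'x) \<Rightarrow> ('x \<Rightarrow> 'u::plus) \<Rightarrow> 'x \<Rightarrow> (nat \<Rightarrow> 'u) \<Rightarrow> nat \<Rightarrow> 'x" where
  "traj f \<pi> \<xi> \<Delta> 0 = \<xi>"
| "traj f \<pi> \<xi> \<Delta> (Suc t) = f (traj f \<pi> \<xi> \<Delta> t) (\<pi> (traj f \<pi> \<xi> \<Delta> t) + \<Delta> t)"

definition class_K :: "(real \<Rightarrow> real) \<Rightarrow> bool" where
  "class_K g \<longleftrightarrow> g 0 = 0 \<and> continuous_on {0..} g \<and> strict_mono_on {0..} g"

definition class_KL :: "(real \<Rightarrow> nat \<Rightarrow> real) \<Rightarrow> bool" where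
  "class_KL b \<longleftrightarrow> (\<forall>t. class_K (\<lambda>s. b s t)) \<and>
     (\<forall>s\<ge>0. antimono (\<lambda>t. b s t) \<and> (\<lambda>t. b s t) \<longlonglongrightarrow> 0)"

definition max_pert :: "(nat \<Rightarrow> 'u::real_normed_vector) \<Rightarrow> nat \<Rightarrow> real" where
  "max_pert \<Delta> t = Max (insert 0 ((\<lambda>k. norm (\<Delta> k)) ` {..<t}))"

definition local_dISS ::
  "('x::real_normed_vector \<Rightarrow> 'u::real_normed_vector \<Rightarrow> 'x) \<Rightarrow> ('x \<Rightarrow> 'u) \<Rightarrow> 'x set \<Rightarrow> real
    \<Rightarrow> (real \<Rightarrow> nat \<Rightarrow> real) \<Rightarrow> (real \<Rightarrow> real) \<Rightarrow> bool" where
  "local_dISS f \<pi> X \<eta> \<beta> \<gamma> \<longleftrightarrow> class_KL \<beta> \<and> class_K \<gamma> \<and>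
     (\<forall>\<xi>1\<in>X. \<forall>\<xi>2\<in>X. \<forall>\<Delta> t. (\<forall>s. norm (\<Delta> s) \<le> \<eta>) \<longrightarrow>
        norm (traj f \<pi> \<xi>1 \<Delta> t - traj f \<pi> \<xi>2 (\<lambda>_. 0) t)
          \<le> \<beta> (norm (\<xi>1 - \<xi>2)) t + \<gamma> (max_pert \<Delta> t))"

(* inverse of gamma on its range (over [0,inf)), +infinity beyond it *)
definition ginv :: "(real \<Rightarrow> real) \<Rightarrow> real \<Rightarrow> ereal" where
  "ginv g y = (if \<exists>s\<ge>0. g s = y then ereal (THE s. s \<ge> 0 \<and> g s = y) else \<infinity>)"

(* j-th derivative applied to directions hs 0, ..., hs (j-1):
   dd pi j x hs = D^j pi(x)[hs 0, ..., hs (j-1)] *)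
primrec dd :: "('x::real_normed_vector \<Rightarrow> 'u::real_normed_vector) \<Rightarrow> nat \<Rightarrow> 'x \<Rightarrow> (nat \<Rightarrow> 'x) \<Rightarrow> 'u" where
  "dd \<pi> 0 x hs = \<pi> x"
| "dd \<pi> (Suc j) x hs = frechet_derivative (\<lambda>y. dd \<pi> j y hs) (at x) (hs j)"

definition Cp :: "('x::real_normed_vector \<Rightarrow> 'u::real_normed_vector) \<Rightarrow> nat \<Rightarrow> bool" where
  "Cp \<pi> p \<longleftrightarrow> (\<forall>j<p. \<forall>hs x. (\<lambda>y. dd \<pi> j y hs) differentiable (at x)) \<and>
               (\<forall>j\<le>p. \<forall>hs. continuous_on UNIV (\<lambda>y. dd \<pi> j y hs))"

definition mlnorm :: "nat \<Rightarrow> ((nat \<Rightarrow> 'x::real_normed_vector) \<Rightarrow> 'u::real_normed_vector) \<Rightarrow> real" where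
  "mlnorm j F = Sup {norm (F hs) | hs. \<forall>i<j. norm (hs i) \<le> 1}"

definition dDelta_norm ::
  "('x::real_normed_vector \<Rightarrow> 'u::real_normed_vector \<Rightarrow> 'x) \<Rightarrow> ('x \<Rightarrow> 'u) \<Rightarrow> ('x \<Rightarrow> 'u) \<Rightarrow> 'x \<Rightarrow> nat \<Rightarrow> nat \<Rightarrow> real" where
  "dDelta_norm f \<pi>s \<pi> \<xi> j t =
     mlnorm j (\<lambda>hs. dd \<pi> j (traj f \<pi>s \<xi> (\<lambda>_. 0) t) hs - dd \<pi>s j (traj f \<pi>s \<xi> (\<lambda>_. 0) t) hs)"

end

theory Submission
  imports Defs
begin

text \<open>Along the test trajectory, the closed loop of \<open>\<pi>\<close> is the closed loop of the expert
\<open>\<pi>\<^sub>\<star>\<close> driven by the input perturbation \<open>\<Delta>\<^sub>t = \<pi>(x\<^sub>t) - \<pi>\<^sub>\<star>(x\<^sub>t)\<close>. Let \<open>M\<close> be the claimed bound.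
If the two trajectories stay within \<open>M\<close> of each other up to time \<open>t\<close>, then comparing the
Taylor expansions of \<open>\<pi>\<close> and \<open>\<pi>\<^sub>\<star>\<close> around the expert states gives
\<open>\<parallel>\<Delta>\<^sub>s\<parallel> \<le> 2L/(p+1)! M\<^sup>p\<^sup>+\<^sup>1 + (M/\<mu>)\<^sup>p\<close> for \<open>s < t\<close>, where the \<open>j < p\<close> terms are summed as a geometric
series in \<open>M \<le> 1/2\<close>. The hypotheses make this bound at most \<open>\<eta>\<close> and at most \<open>\<gamma>\<^sup>-\<^sup>1(M)\<close>, so
incremental ISS with equal initial states keeps the trajectories within \<open>M\<close> at time \<open>t\<close>;
induction on \<open>t\<close> closes the argument.\<close>

section \<open>Multilinear maps\<close>

text \<open>The encoding of \<open>j\<close>-linear maps used by \<open>dd\<close> and \<open>mlnorm\<close>: linear in each of the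
first \<open>j\<close> directions and independent of all later ones.\<close>
definition multilinear :: "nat \<Rightarrow> ((nat \<Rightarrow> 'x::real_normed_vector) \<Rightarrow> 'u::real_normed_vector) \<Rightarrow> bool" where
  "multilinear j F \<longleftrightarrow> (\<forall>i<j. \<forall>hs. linear (\<lambda>v. F (hs(i := v))))
                        \<and> (\<forall>hs hs'. (\<forall>i<j. hs i = hs' i) \<longrightarrow> F hs = F hs')"

lemma multilinear_cong: "multilinear j F \<Longrightarrow> (\<And>i. i < j \<Longrightarrow> hs i = hs' i) \<Longrightarrow> F hs = F hs'"
  unfolding multilinear_def by blast

lemma multilinear_linear: "multilinear j F \<Longrightarrow> i < j \<Longrightarrow> linear (\<lambda>v. F (hs(i := v)))"
  unfolding multilinear_def by blast

lemma multilinear_diff: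
  assumes "multilinear j F" "multilinear j G"
  shows "multilinear j (\<lambda>hs. F hs - G hs)"
proof -
  have "linear (\<lambda>v. F (hs(i := v)) - G (hs(i := v)))" if "i < j" for i hs
    using multilinear_linear[OF assms(1) that] multilinear_linear[OF assms(2) that]
    by (rule real_vector.linear_compose_sub)
  moreover have "F hs - G hs = F hs' - G hs'" if "\<forall>i<j. hs i = hs' i" for hs hs'
    using multilinear_cong[OF assms(1), of hs hs'] multilinear_cong[OF assms(2), of hs hs'] that by simp
  ultimately show ?thesis unfolding multilinear_def by blast
qed

text \<open>Freeing the directions one at a time: a new free direction is expanded in the basis.\<close>
lemma multilinear_bounded_partial:
  fixes F :: "(nat \<Rightarrow> 'x::euclidean_space) \<Rightarrow> 'u::real_normed_vector"
  assumes "multilinear j F" "m \<le> j"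
  shows "\<exists>K. \<forall>hs. (\<forall>i<m. norm (hs i) \<le> 1) \<and> (\<forall>i\<ge>m. hs i = hs0 i) \<longrightarrow> norm (F hs) \<le> K"
  using assms(2)
proof (induction m arbitrary: hs0)
  case 0
  then show ?case by (intro exI[of _ "norm (F hs0)"]) (auto simp: fun_eq_iff)
next
  case (Suc m)
  have lin: "linear (\<lambda>v. F (hs(m := v)))" for hs
    using multilinear_linear[OF assms(1)] Suc.prems by simp
  have "\<forall>b\<in>Basis. \<exists>K. \<forall>hs. (\<forall>i<m. norm (hs i) \<le> 1) \<and> (\<forall>i\<ge>m. hs i = (hs0(m := b)) i)
      \<longrightarrow> norm (F hs) \<le> K"
    using Suc by auto
  then obtain K where K: "\<And>b hs. b \<in> Basis \<Longrightarrow> \<forall>i<m. norm (hs i) \<le> 1 \<Longrightarrow> \<forall>i\<ge>m. hs i = (hs0(m := b)) i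
      \<Longrightarrow> norm (F hs) \<le> K b"
    by metis
  show ?case
  proof (intro exI allI impI)
    fix hs :: "nat \<Rightarrow> 'x"
    assume hs: "(\<forall>i<Suc m. norm (hs i) \<le> 1) \<and> (\<forall>i\<ge>Suc m. hs i = hs0 i)"
    have "F hs = F (hs(m := (\<Sum>b\<in>Basis. (hs m \<bullet> b) *\<^sub>R b)))"
      by (simp add: euclidean_representation)
    also have "\<dots> = (\<Sum>b\<in>Basis. (hs m \<bullet> b) *\<^sub>R F (hs(m := b)))"
      by (simp add: real_vector.linear_sum[OF lin] linear_cmul[OF lin])
    finally have "norm (F hs) \<le> (\<Sum>b\<in>Basis. \<bar>hs m \<bullet> b\<bar> * norm (F (hs(m := b))))"
      by (metis (no_types, lifting) norm_scaleR norm_sum sum.cong)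
    also have "\<dots> \<le> (\<Sum>b\<in>Basis. 1 * \<bar>K b\<bar>)"
    proof (intro sum_mono mult_mono)
      fix b :: 'x
      assume b: "b \<in> Basis"
      show "\<bar>hs m \<bullet> b\<bar> \<le> 1" using Basis_le_norm[OF b, of "hs m"] hs by force
      show "norm (F (hs(m := b))) \<le> \<bar>K b\<bar>" using K[OF b, of "hs(m := b)"] hs by force
    qed auto
    finally show "norm (F hs) \<le> (\<Sum>b\<in>Basis. \<bar>K b\<bar>)" by simp
  qed
qed

lemma bdd_above_multilinear:
  fixes F :: "(nat \<Rightarrow> 'x::euclidean_space) \<Rightarrow> 'u::real_normed_vector"
  assumes "multilinear j F"
  shows "bdd_above {norm (F hs) | hs. \<forall>i<j. norm (hs i) \<le> 1}"
proof -
  obtain K where K: "\<And>hs. (\<forall>i<j. norm (hs i) \<le> 1) \<and> (\<forall>i\<ge>j. hs i = 0) \<Longrightarrow> norm (F hs) \<le> K"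
    using multilinear_bounded_partial[OF assms order_refl, of "\<lambda>_. 0"] by blast
  have "norm (F hs) \<le> K" if "\<forall>i<j. norm (hs i) \<le> 1" for hs
  proof -
    have "F hs = F (\<lambda>i. if i < j then hs i else 0)"
      by (rule multilinear_cong[OF assms]) simp
    then show ?thesis using K[of "\<lambda>i. if i < j then hs i else 0"] that by auto
  qed
  then show ?thesis unfolding bdd_above_def by blast
qed

lemma multilinear_diag_scaleR:
  assumes "multilinear j F"
  shows "F (\<lambda>_. c *\<^sub>R u) = c ^ j *\<^sub>R F (\<lambda>_. u)"
proof -
  define hs where "hs m = (\<lambda>i. if i < m then c *\<^sub>R u else u)" for m :: nat
  have "F (hs m) = c ^ m *\<^sub>R F (\<lambda>_. u)" if "m \<le> j" for m
    using that
  proof (induction m)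
    case (Suc m)
    have lin: "linear (\<lambda>v. F ((hs m)(m := v)))"
      using multilinear_linear[OF assms] Suc.prems by simp
    have "hs (Suc m) = (hs m)(m := c *\<^sub>R u)" "(hs m)(m := u) = hs m"
      by (auto simp: hs_def fun_eq_iff)
    then have "F (hs (Suc m)) = c *\<^sub>R F (hs m)"
      using linear_cmul[OF lin, of c u] by (simp only:)
    then show ?case using Suc by simp
  qed (simp add: hs_def)
  moreover have "F (\<lambda>_. c *\<^sub>R u) = F (hs j)"
    by (rule multilinear_cong[OF assms]) (simp add: hs_def)
  ultimately show ?thesis by simp
qed

lemma mlnorm_upper:
  fixes F :: "(nat \<Rightarrow> 'x::euclidean_space) \<Rightarrow> 'u::real_normed_vector"
  assumes "multilinear j F" "\<forall>i<j. norm (hs i) \<le> 1"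
  shows "norm (F hs) \<le> mlnorm j F"
  unfolding mlnorm_def using assms by (intro cSup_upper bdd_above_multilinear) auto

lemma mlnorm_nonneg:
  fixes F :: "(nat \<Rightarrow> 'x::euclidean_space) \<Rightarrow> 'u::real_normed_vector"
  assumes "multilinear j F"
  shows "0 \<le> mlnorm j F"
proof -
  have "norm (F (\<lambda>_. 0)) \<le> mlnorm j F" by (rule mlnorm_upper[OF assms]) simp
  then show ?thesis by (meson norm_ge_zero order_trans)
qed

lemma norm_multilinear_diag_le:
  fixes F :: "(nat \<Rightarrow> 'x::euclidean_space) \<Rightarrow> 'u::real_normed_vector"
  assumes "multilinear j F"
  shows "norm (F (\<lambda>_. d)) \<le> mlnorm j F * norm d ^ j"
proof -
  have "F (\<lambda>_. d) = F (\<lambda>_. norm d *\<^sub>R sgn d)"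
    by (cases "d = 0") (simp_all add: sgn_div_norm)
  also have "\<dots> = norm d ^ j *\<^sub>R F (\<lambda>_. sgn d)"
    by (rule multilinear_diag_scaleR[OF assms])
  finally have "norm (F (\<lambda>_. d)) = norm d ^ j * norm (F (\<lambda>_. sgn d))" by simp
  also have "\<dots> \<le> norm d ^ j * mlnorm j F"
    by (intro mult_left_mono mlnorm_upper[OF assms]) (auto simp: norm_sgn)
  finally show ?thesis by (simp add: mult.commute)
qed

section \<open>Comparing the Taylor expansions of two policies\<close>

lemma dd_cong: "(\<And>i. i < j \<Longrightarrow> hs i = hs' i) \<Longrightarrow> dd \<pi> j x hs = dd \<pi> j x hs'"
proof (induction j arbitrary: x)
  case (Suc j)
  then have "(\<lambda>y. dd \<pi> j y hs) = (\<lambda>y. dd \<pi> j y hs')" by auto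
  then show ?case using Suc.prems by simp
qed simp

lemma linear_dd_direction:
  assumes "Cp \<pi> p" "j \<le> p" "i < j"
  shows "linear (\<lambda>v. dd \<pi> j x (hs(i := v)))"
  using assms(2,3)
proof (induction j arbitrary: i x hs)
  case (Suc j)
  have diff: "(\<lambda>y. dd \<pi> j y hs) differentiable (at x)" for hs x
    using assms(1) Suc.prems unfolding Cp_def by auto
  show ?case
  proof (cases "i = j")
    case True
    have "(\<lambda>y. dd \<pi> j y (hs(j := v))) = (\<lambda>y. dd \<pi> j y hs)" for v
      by (intro ext dd_cong) auto
    then have "dd \<pi> (Suc j) x (hs(j := v)) = frechet_derivative (\<lambda>y. dd \<pi> j y hs) (at x) v" for v
      by (simp only: dd.simps fun_upd_same)
    then show ?thesis using True linear_frechet_derivative[OF diff[of hs x]] by (simp only:)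
  next
    case False
    with Suc.prems have "i < j" by simp
    define g where "g v = (\<lambda>y. dd \<pi> j y (hs(i := v)))" for v
    have lin: "linear (\<lambda>v. g v y)" for y
      unfolding g_def by (rule Suc.IH) (use Suc.prems \<open>i < j\<close> in auto)
    have Dg: "(g v has_derivative frechet_derivative (g v) (at x)) (at x)" for v
      using diff unfolding g_def frechet_derivative_works by blast
    have dd_g: "dd \<pi> (Suc j) x (hs(i := v)) = frechet_derivative (g v) (at x) (hs j)" for v
      using \<open>i < j\<close> by (simp add: g_def)
    show ?thesis
    proof (rule linearI)
      fix a b
      have "g (a + b) = (\<lambda>y. g a y + g b y)" using real_vector.linear_add[OF lin] by blast
      then have "(g (a + b) has_derivative
          (\<lambda>h. frechet_derivative (g a) (at x) h + frechet_derivative (g b) (at x) h)) (at x)"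
        using has_derivative_add[OF Dg Dg] by simp
      from fun_cong[OF frechet_derivative_at[OF this], of "hs j"]
      show "dd \<pi> (Suc j) x (hs(i := a + b)) = dd \<pi> (Suc j) x (hs(i := a)) + dd \<pi> (Suc j) x (hs(i := b))"
        by (simp only: dd_g)
    next
      fix r a
      have "g (r *\<^sub>R a) = (\<lambda>y. r *\<^sub>R g a y)" using linear_cmul[OF lin] by blast
      then have "(g (r *\<^sub>R a) has_derivative (\<lambda>h. r *\<^sub>R frechet_derivative (g a) (at x) h)) (at x)"
        using has_derivative_scaleR_right[OF Dg] by simp
      from fun_cong[OF frechet_derivative_at[OF this], of "hs j"]
      show "dd \<pi> (Suc j) x (hs(i := r *\<^sub>R a)) = r *\<^sub>R dd \<pi> (Suc j) x (hs(i := a))"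
        by (simp only: dd_g)
    qed
  qed
qed simp

lemma multilinear_dd: "Cp \<pi> p \<Longrightarrow> j \<le> p \<Longrightarrow> multilinear j (dd \<pi> j x)"
  unfolding multilinear_def using linear_dd_direction[of \<pi> p j] dd_cong[of j] by blast

lemma multilinear_dd_diff:
  "Cp \<pi> p \<Longrightarrow> Cp \<pi>s p \<Longrightarrow> j \<le> p \<Longrightarrow> multilinear j (\<lambda>hs. dd \<pi> j x hs - dd \<pi>s j x hs)"
  by (intro multilinear_diff multilinear_dd)

lemma dDelta_norm_nonneg:
  fixes f :: "'x::euclidean_space \<Rightarrow> 'u::euclidean_space \<Rightarrow> 'x"
  shows "Cp \<pi> p \<Longrightarrow> Cp \<pi>s p \<Longrightarrow> j \<le> p \<Longrightarrow> 0 \<le> dDelta_norm f \<pi>s \<pi> \<xi> j t"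
  unfolding dDelta_norm_def by (intro mlnorm_nonneg multilinear_dd_diff)

lemma norm_diff_le_Taylor:
  fixes \<pi> \<pi>s :: "'x::euclidean_space \<Rightarrow> 'u::real_normed_vector"
  assumes "Cp \<pi> p" "Cp \<pi>s p"
    and "norm (\<pi> x - (\<Sum>j\<le>p. (1 / fact j) *\<^sub>R dd \<pi> j x0 (\<lambda>_. x - x0))) \<le> R"
    and "norm (\<pi>s x - (\<Sum>j\<le>p. (1 / fact j) *\<^sub>R dd \<pi>s j x0 (\<lambda>_. x - x0))) \<le> R"
  shows "norm (\<pi> x - \<pi>s x)
    \<le> 2 * R + (\<Sum>j\<le>p. mlnorm j (\<lambda>hs. dd \<pi> j x0 hs - dd \<pi>s j x0 hs) / fact j * norm (x - x0) ^ j)"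
proof -
  define P where "P = (\<Sum>j\<le>p. (1 / fact j) *\<^sub>R dd \<pi> j x0 (\<lambda>_. x - x0))"
  define Ps where "Ps = (\<Sum>j\<le>p. (1 / fact j) *\<^sub>R dd \<pi>s j x0 (\<lambda>_. x - x0))"
  have "P - Ps = (\<Sum>j\<le>p. (1 / fact j) *\<^sub>R (dd \<pi> j x0 (\<lambda>_. x - x0) - dd \<pi>s j x0 (\<lambda>_. x - x0)))"
    by (simp add: P_def Ps_def sum_subtractf scaleR_diff_right)
  also have "norm \<dots>
      \<le> (\<Sum>j\<le>p. mlnorm j (\<lambda>hs. dd \<pi> j x0 hs - dd \<pi>s j x0 hs) / fact j * norm (x - x0) ^ j)"
    using norm_multilinear_diag_le[OF multilinear_dd_diff[OF assms(1,2)]]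
    by (intro order_trans[OF norm_sum] sum_mono) (simp add: divide_right_mono)
  finally have "norm (P - Ps) \<le> \<dots>" .
  moreover have "norm (\<pi> x - \<pi>s x) \<le> norm (\<pi> x - P) + norm (\<pi>s x - Ps) + norm (P - Ps)"
  proof -
    have "\<pi> x - \<pi>s x = ((\<pi> x - P) - (\<pi>s x - Ps)) + (P - Ps)" by simp
    then show ?thesis
      using norm_triangle_ineq[of "(\<pi> x - P) - (\<pi>s x - Ps)" "P - Ps"]
        norm_triangle_ineq4[of "\<pi> x - P" "\<pi>s x - Ps"] by (smt (verit))
  qed
  ultimately show ?thesis using assms(3,4) unfolding P_def Ps_def by linarith
qed

lemma sum_power_le_two:
  fixes x :: real
  assumes "0 \<le> x" "x \<le> 1/2"
  shows "(\<Sum>j<n. x ^ j) \<le> 2"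
proof -
  have "(\<Sum>j<n. x ^ j) \<le> 2 - 2 * x ^ n"
  proof (induction n)
    case (Suc n)
    have "2 * (x * x ^ n) \<le> x ^ n"
      using mult_right_mono[of "2 * x" 1 "x ^ n"] assms by (simp add: algebra_simps)
    with Suc show ?case by simp
  qed simp
  then show ?thesis using zero_le_power[OF assms(1), of n] by linarith
qed

lemma powr_inverse_nat_power:
  fixes y :: real
  assumes "0 \<le> y" "0 < n" "0 < p"
  shows "(y powr (1 / real p)) ^ n = y powr (real n / real p)"
proof (cases "y = 0")
  case False
  then have "(y powr (1 / real p)) ^ n = (y powr (1 / real p)) powr real n"
    using assms by (simp add: powr_realpow)
  then show ?thesis by (simp add: powr_powr)
qed (use assms in simp)

definition policy_gap_bound :: "real \<Rightarrow> real \<Rightarrow> nat \<Rightarrow> real \<Rightarrow> real" where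
  "policy_gap_bound L \<mu> p M = 2 * (L / fact (p + 1)) * M ^ (p + 1) + (M / \<mu>) ^ p"

lemma policy_gap_bound_nonneg: "0 \<le> L \<Longrightarrow> 0 < \<mu> \<Longrightarrow> 0 \<le> M \<Longrightarrow> 0 \<le> policy_gap_bound L \<mu> p M"
  unfolding policy_gap_bound_def by simp

lemma policy_gap_bound_root:
  assumes "0 \<le> y" "0 < \<mu>" "1 \<le> p"
  shows "policy_gap_bound L \<mu> p (\<mu> * y powr (1 / real p))
    = 2 * L * \<mu> ^ (p + 1) / fact (p + 1) * y powr ((real p + 1) / real p) + y"
proof -
  have "(\<mu> * y powr (1 / real p)) ^ (p + 1) = \<mu> ^ (p + 1) * y powr ((real p + 1) / real p)"
    using powr_inverse_nat_power[OF assms(1), of "p + 1" p] assms(3)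
    by (simp add: power_mult_distrib add.commute)
  moreover have "(\<mu> * y powr (1 / real p) / \<mu>) ^ p = y"
    using powr_inverse_nat_power[OF assms(1), of p p] assms by (simp add: powr_one)
  ultimately show ?thesis unfolding policy_gap_bound_def by (simp add: field_simps)
qed

text \<open>The terms \<open>j < p\<close> of the Taylor comparison form a geometric series in \<open>M \<le> 1/2\<close> worth
\<open>(M/\<mu>)\<^sup>p/2\<close>; the term \<open>j = p\<close> contributes another \<open>(M/\<mu>)\<^sup>p/2\<close>.\<close>
lemma policy_gap_le:
  fixes \<pi> \<pi>s :: "'x::euclidean_space \<Rightarrow> 'u::real_normed_vector"
  assumes smooth: "Cp \<pi> p" "Cp \<pi>s p"
    and L: "0 \<le> L" and \<mu>: "0 < \<mu>" and M: "norm (x - x0) \<le> M" "M \<le> 1/2"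
    and taylor: "\<And>\<pi>b. \<pi>b \<in> {\<pi>, \<pi>s} \<Longrightarrow>
      norm (\<pi>b x - (\<Sum>j\<le>p. (1 / fact j) *\<^sub>R dd \<pi>b j x0 (\<lambda>_. x - x0)))
        \<le> L / fact (p + 1) * norm (x - x0) ^ (p + 1)"
    and lower: "\<And>j. j < p \<Longrightarrow> 4 / fact j * mlnorm j (\<lambda>hs. dd \<pi> j x0 hs - dd \<pi>s j x0 hs) \<le> (M / \<mu>) ^ p"
    and top: "mlnorm p (\<lambda>hs. dd \<pi> p x0 hs - dd \<pi>s p x0 hs) \<le> fact p / (2 * \<mu> ^ p)"
  shows "norm (\<pi> x - \<pi>s x) \<le> policy_gap_bound L \<mu> p M"
proof -
  define a where "a j = mlnorm j (\<lambda>hs. dd \<pi> j x0 hs - dd \<pi>s j x0 hs)" for j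
  define d where "d = norm (x - x0)"
  have d: "0 \<le> d" "d \<le> M" using M by (auto simp: d_def)
  then have M0: "0 \<le> M" by linarith
  have a_nonneg: "0 \<le> a j" if "j \<le> p" for j
    unfolding a_def by (rule mlnorm_nonneg[OF multilinear_dd_diff[OF smooth that]])
  have "norm (\<pi> x - \<pi>s x) \<le> 2 * (L / fact (p + 1) * d ^ (p + 1)) + (\<Sum>j\<le>p. a j / fact j * d ^ j)"
    using norm_diff_le_Taylor[OF smooth taylor taylor] by (simp add: a_def d_def)
  also have "(\<Sum>j\<le>p. a j / fact j * d ^ j) = (\<Sum>j<p. a j / fact j * d ^ j) + a p / fact p * d ^ p"
    by (simp add: lessThan_Suc_atMost[symmetric])
  also have "(\<Sum>j<p. a j / fact j * d ^ j) \<le> (\<Sum>j<p. (M / \<mu>) ^ p / 4 * M ^ j)"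
  proof (rule sum_mono)
    fix j assume "j \<in> {..<p}"
    then have "a j / fact j \<le> (M / \<mu>) ^ p / 4"
      using divide_right_mono[OF lower[of j], of 4] by (simp add: a_def)
    then show "a j / fact j * d ^ j \<le> (M / \<mu>) ^ p / 4 * M ^ j"
      using d M0 \<mu> by (intro mult_mono power_mono) auto
  qed
  also have "\<dots> \<le> (M / \<mu>) ^ p / 4 * 2"
    unfolding sum_distrib_left[symmetric]
    using sum_power_le_two[OF M0 M(2)] M0 \<mu> by (intro mult_left_mono) auto
  also have "a p / fact p * d ^ p \<le> (fact p / (2 * \<mu> ^ p)) / fact p * M ^ p"
    using top a_nonneg[of p] d \<mu> by (intro mult_mono power_mono divide_right_mono) (auto simp: a_def)
  also have "\<dots> = (M / \<mu>) ^ p / 2" by (simp add: power_divide)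
  also have "2 * (L / fact (p + 1) * d ^ (p + 1)) \<le> 2 * (L / fact (p + 1) * M ^ (p + 1))"
    using L d by (intro mult_left_mono power_mono) auto
  finally show ?thesis unfolding policy_gap_bound_def by simp
qed

section \<open>Incremental ISS under the feedback perturbation\<close>

lemma traj_feedback_eq_perturbed:
  fixes \<Delta> :: "nat \<Rightarrow> 'u::ab_group_add"
  assumes "\<And>s. s < t \<Longrightarrow> \<Delta> s = \<pi> (traj f \<pi> \<xi> (\<lambda>_. 0) s) - \<pi>s (traj f \<pi> \<xi> (\<lambda>_. 0) s)"
  shows "n \<le> t \<Longrightarrow> traj f \<pi>s \<xi> \<Delta> n = traj f \<pi> \<xi> (\<lambda>_. 0) n"
  by (induction n) (use assms in auto)

lemma class_K_le_if_le_ginv: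
  assumes K: "class_K \<gamma>" and "0 \<le> y" "0 \<le> x" and le: "ereal x \<le> ginv \<gamma> y"
  shows "\<gamma> x \<le> y"
proof -
  have mono: "strict_mono_on {0..} \<gamma>" and cont: "continuous_on {0..x} \<gamma>" and "\<gamma> 0 = 0"
    using K unfolding class_K_def by (auto intro: continuous_on_subset)
  show ?thesis
  proof (cases "\<exists>s\<ge>0. \<gamma> s = y")
    case True
    then obtain s where s: "s \<ge> 0" "\<gamma> s = y" by blast
    have "(THE s. s \<ge> 0 \<and> \<gamma> s = y) = s"
      using s strict_mono_on_eqD[OF mono, of s] by (intro the_equality) auto
    then have "x \<le> s" using le True unfolding ginv_def by simp
    then show ?thesis using strict_mono_on_leD[OF mono, of x s] s \<open>0 \<le> x\<close> by simp
  next
    case False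
    then show ?thesis
      using IVT'[of \<gamma> 0 y x] cont \<open>\<gamma> 0 = 0\<close> \<open>0 \<le> y\<close> \<open>0 \<le> x\<close> by force
  qed
qed

text \<open>Feeding back \<open>\<pi>\<close> is the expert loop under the perturbation \<open>\<Delta>\<^sub>s = \<pi>(x\<^sub>s) - \<pi>\<^sub>\<star>(x\<^sub>s)\<close>;
both loops start at \<open>\<xi>\<close>, so the \<open>\<beta>\<close>-term of incremental ISS vanishes.\<close>
lemma local_dISS_feedback_deviation:
  fixes f :: "'x::real_normed_vector \<Rightarrow> 'u::real_normed_vector \<Rightarrow> 'x"
  assumes ISS: "local_dISS f \<pi>s X \<eta> \<beta> \<gamma>" and "\<xi> \<in> X" and b: "0 \<le> b" "b \<le> \<eta>"
    and gap: "\<And>s. s < t \<Longrightarrow> norm (\<pi> (traj f \<pi> \<xi> (\<lambda>_. 0) s) - \<pi>s (traj f \<pi> \<xi> (\<lambda>_. 0) s)) \<le> b"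
  shows "norm (traj f \<pi> \<xi> (\<lambda>_. 0) t - traj f \<pi>s \<xi> (\<lambda>_. 0) t) \<le> \<gamma> b"
proof -
  define \<Delta> where "\<Delta> s = (if s < t then \<pi> (traj f \<pi> \<xi> (\<lambda>_. 0) s) - \<pi>s (traj f \<pi> \<xi> (\<lambda>_. 0) s) else 0)"
    for s
  have \<Delta>: "norm (\<Delta> s) \<le> b" for s
    using gap b by (simp add: \<Delta>_def)
  have "traj f \<pi>s \<xi> \<Delta> t = traj f \<pi> \<xi> (\<lambda>_. 0) t"
    by (rule traj_feedback_eq_perturbed) (auto simp: \<Delta>_def)
  moreover have "\<beta> 0 t = 0" and mono: "strict_mono_on {0..} \<gamma>"
    using ISS unfolding local_dISS_def class_KL_def class_K_def by auto
  moreover have "norm (traj f \<pi>s \<xi> \<Delta> t - traj f \<pi>s \<xi> (\<lambda>_. 0) t) \<le> \<beta> 0 t + \<gamma> (max_pert \<Delta> t)"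
  proof -
    have "\<forall>s. norm (\<Delta> s) \<le> \<eta>" using \<Delta> b(2) order_trans by blast
    then show ?thesis using ISS \<open>\<xi> \<in> X\<close> unfolding local_dISS_def by fastforce
  qed
  moreover have "\<gamma> (max_pert \<Delta> t) \<le> \<gamma> b"
  proof -
    have "0 \<le> max_pert \<Delta> t" unfolding max_pert_def by (rule Max_ge) auto
    moreover have "max_pert \<Delta> t \<le> b" unfolding max_pert_def using \<Delta> b by (intro Max.boundedI) auto
    ultimately show ?thesis using b by (intro strict_mono_on_leD[OF mono]) auto
  qed
  ultimately show ?thesis by simp
qed

lemma local_dISS_bootstrap:
  fixes f :: "'x::real_normed_vector \<Rightarrow> 'u::real_normed_vector \<Rightarrow> 'x"
    and \<pi> \<pi>s :: "'x \<Rightarrow> 'u" and \<xi> :: 'x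
  defines "xs \<equiv> traj f \<pi>s \<xi> (\<lambda>_. 0)" and "xp \<equiv> traj f \<pi> \<xi> (\<lambda>_. 0)"
  assumes ISS: "local_dISS f \<pi>s X \<eta> \<beta> \<gamma>" and "\<xi> \<in> X"
    and mono: "\<And>k t. 1 \<le> k \<Longrightarrow> k \<le> t \<Longrightarrow> M k \<le> M t"
    and budget: "\<And>t. 1 \<le> t \<Longrightarrow> t \<le> T \<Longrightarrow>
      0 \<le> M t \<and> 0 \<le> B (M t) \<and> B (M t) \<le> \<eta> \<and> \<gamma> (B (M t)) \<le> M t"
    and gap: "\<And>t k. 1 \<le> t \<Longrightarrow> t \<le> T \<Longrightarrow> k < t \<Longrightarrow> norm (xp k - xs k) \<le> M t \<Longrightarrow>
      norm (\<pi> (xp k) - \<pi>s (xp k)) \<le> B (M t)"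
  shows "1 \<le> t \<Longrightarrow> t \<le> T \<Longrightarrow> norm (xs t - xp t) \<le> M t"
proof (induction t rule: less_induct)
  case (less t)
  have "norm (xp k - xs k) \<le> M t" if "k < t" for k
  proof (cases "k = 0")
    case True
    then show ?thesis using budget[OF less.prems] by (simp add: xs_def xp_def)
  next
    case False
    then have "norm (xs k - xp k) \<le> M k" using less.IH[of k] that less.prems by simp
    then show ?thesis using mono[of k t] False that by (simp add: norm_minus_commute)
  qed
  then have "norm (xp t - xs t) \<le> \<gamma> (B (M t))"
    using local_dISS_feedback_deviation[OF ISS \<open>\<xi> \<in> X\<close>] budget[OF less.prems] gap[OF less.prems]
    unfolding xs_def xp_def by blast
  then show ?case using budget[OF less.prems] by (simp add: norm_minus_commute)
qed

section \<open>The deviation radius\<close>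

text \<open>The right-hand side of the theorem as a function of \<open>t\<close>, with \<open>a j k\<close> standing for
\<open>\<parallel>\<partial>\<^sup>j\<Delta>\<^sub>k\<parallel>\<close>.\<close>
definition dev_radius :: "real \<Rightarrow> nat \<Rightarrow> (nat \<Rightarrow> nat \<Rightarrow> real) \<Rightarrow> nat \<Rightarrow> real" where
  "dev_radius \<mu> p a t =
     Max {\<mu> * (4 / fact j) powr (1 / real p) * a j k powr (1 / real p) | k j. k < t \<and> j < p}"

lemma dev_radius_eq_Max_image:
  "dev_radius \<mu> p a t
    = Max ((\<lambda>(k, j). \<mu> * (4 / fact j * a j k) powr (1 / real p)) ` ({..<t} \<times> {..<p}))"
proof -
  have "{\<mu> * (4 / fact j) powr (1 / real p) * a j k powr (1 / real p) | k j. k < t \<and> j < p}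
      = (\<lambda>(k, j). \<mu> * ((4 / fact j) powr (1 / real p) * a j k powr (1 / real p))) ` ({..<t} \<times> {..<p})"
    by (auto simp: mult.assoc)
  then show ?thesis by (simp only: dev_radius_def powr_mult)
qed

lemma dev_radius_attained:
  assumes "1 \<le> t" "1 \<le> p"
  shows "\<exists>k<t. \<exists>j<p. dev_radius \<mu> p a t = \<mu> * (4 / fact j * a j k) powr (1 / real p)"
proof -
  have "({..<t} \<times> {..<p}) \<noteq> {}" using assms by (auto simp: lessThan_empty_iff)
  then have "dev_radius \<mu> p a t \<in> (\<lambda>(k, j). \<mu> * (4 / fact j * a j k) powr (1 / real p)) ` ({..<t} \<times> {..<p})"
    unfolding dev_radius_eq_Max_image by (intro Max_in) auto
  then show ?thesis by auto
qed

lemma dev_radius_mono: "1 \<le> k \<Longrightarrow> k \<le> t \<Longrightarrow> 1 \<le> p \<Longrightarrow> dev_radius \<mu> p a k \<le> dev_radius \<mu> p a t"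
  unfolding dev_radius_eq_Max_image by (intro Max_mono image_mono) (auto simp: lessThan_empty_iff)

lemma le_dev_radius_power:
  assumes "0 \<le> a j k" "0 < \<mu>" "1 \<le> p" "k < t" "j < p"
  shows "4 / fact j * a j k \<le> (dev_radius \<mu> p a t / \<mu>) ^ p"
proof -
  define y where "y = 4 / fact j * a j k"
  have y: "0 \<le> y" using assms(1) by (simp add: y_def)
  have "\<mu> * y powr (1 / real p) \<le> dev_radius \<mu> p a t"
    unfolding dev_radius_eq_Max_image y_def using assms(4,5)
    by (intro Max_ge) (auto intro!: image_eqI[where x = "(k, j)"])
  then have "y powr (1 / real p) \<le> dev_radius \<mu> p a t / \<mu>"
    using assms(2) by (simp add: pos_le_divide_eq mult.commute)
  then have "(y powr (1 / real p)) ^ p \<le> (dev_radius \<mu> p a t / \<mu>) ^ p"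
    by (intro power_mono) auto
  moreover have "(y powr (1 / real p)) ^ p = y"
    using powr_inverse_nat_power[OF y, of p p] assms(3) y by simp
  ultimately show ?thesis by (simp only: y_def)
qed

lemma traj_policy_gap_le:
  fixes f :: "'x::euclidean_space \<Rightarrow> 'u::euclidean_space \<Rightarrow> 'x" and \<pi> \<pi>s :: "'x \<Rightarrow> 'u"
    and \<xi> :: 'x and \<mu> :: real and p t :: nat
  defines "xs \<equiv> traj f \<pi>s \<xi> (\<lambda>_. 0)" and "xp \<equiv> traj f \<pi> \<xi> (\<lambda>_. 0)"
    and "M \<equiv> dev_radius \<mu> p (dDelta_norm f \<pi>s \<pi> \<xi>) t"
  assumes smooth: "Cp \<pi> p" "Cp \<pi>s p"
    and taylor: "\<forall>\<pi>b\<in>{\<pi>, \<pi>s}. \<forall>x x0.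
        norm (\<pi>b x - (\<Sum>j\<le>p. (1 / fact j) *\<^sub>R dd \<pi>b j x0 (\<lambda>_. x - x0)))
          \<le> L / fact (p + 1) * norm (x - x0) ^ (p + 1)"
    and L: "0 \<le> L" and \<mu>: "0 < \<mu>" and p: "1 \<le> p" and "M \<le> 1/2" and "k < t"
    and dev: "norm (xp k - xs k) \<le> M"
    and top: "dDelta_norm f \<pi>s \<pi> \<xi> p k \<le> fact p / (2 * \<mu> ^ p)"
  shows "norm (\<pi> (xp k) - \<pi>s (xp k)) \<le> policy_gap_bound L \<mu> p M"
proof (rule policy_gap_le[OF smooth L \<mu> dev])
  show "norm (\<pi>b (xp k) - (\<Sum>j\<le>p. (1 / fact j) *\<^sub>R dd \<pi>b j (xs k) (\<lambda>_. xp k - xs k)))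
      \<le> L / fact (p + 1) * norm (xp k - xs k) ^ (p + 1)" if "\<pi>b \<in> {\<pi>, \<pi>s}" for \<pi>b
    using taylor that by blast
  show "4 / fact j * mlnorm j (\<lambda>hs. dd \<pi> j (xs k) hs - dd \<pi>s j (xs k) hs) \<le> (M / \<mu>) ^ p"
    if "j < p" for j
    using le_dev_radius_power[of "dDelta_norm f \<pi>s \<pi> \<xi>" j k,
        OF dDelta_norm_nonneg[OF smooth less_imp_le[OF that]] \<mu> p \<open>k < t\<close> that]
    unfolding M_def dDelta_norm_def xs_def by simp
  show "mlnorm p (\<lambda>hs. dd \<pi> p (xs k) hs - dd \<pi>s p (xs k) hs) \<le> fact p / (2 * \<mu> ^ p)"
    using top unfolding dDelta_norm_def xs_def .
qed fact

theorem mainTheorem4: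
  fixes f :: "'x::euclidean_space \<Rightarrow> 'u::euclidean_space \<Rightarrow> 'x"
    and \<pi>s \<pi> :: "'x \<Rightarrow> 'u"
    and X :: "'x set" and \<xi> :: 'x
    and \<eta> L \<mu> \<alpha> :: real
    and \<beta> :: "real \<Rightarrow> nat \<Rightarrow> real" and \<gamma> :: "real \<Rightarrow> real"
    and p T :: nat
  assumes X: "compact X"
    and eta: "\<eta> > 0"
    and ISS: "local_dISS f \<pi>s X \<eta> \<beta> \<gamma>"
    and p: "p \<ge> 1"
    and gain: "\<exists>C. \<forall>\<^sub>F x in at_right 0. \<gamma> x \<le> C * x powr (1 / real p)"
    and smooth: "Cp \<pi> p" "Cp \<pi>s p"
    and taylor: "\<forall>\<pi>b\<in>{\<pi>, \<pi>s}. \<forall>x x0.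
        norm (\<pi>b x - (\<Sum>j\<le>p. (1 / fact j) *\<^sub>R dd \<pi>b j x0 (\<lambda>_. x - x0)))
          \<le> L / fact (p + 1) * norm (x - x0) ^ (p + 1)"
    and mu: "\<mu> > 0" and alpha: "\<alpha> > 0" "\<alpha> \<le> 1/2"
    and ginv_cond: "\<forall>x\<in>{0..\<alpha>}.
        ereal (2 * (L / fact (p + 1)) * x ^ (p + 1) + (x / \<mu>) ^ p) \<le> ginv \<gamma> x"
    and xi: "\<xi> \<in> X"
    and H1: "\<forall>t<T. \<forall>j<p. \<mu> * (4 / fact j * dDelta_norm f \<pi>s \<pi> \<xi> j t) powr (1 / real p) \<le> \<alpha>"
    and H2: "\<forall>t<T. \<forall>j<p.
        2 * L * \<mu> ^ (p + 1) / fact (p + 1)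
          * (4 / fact j * dDelta_norm f \<pi>s \<pi> \<xi> j t) powr ((real p + 1) / real p)
        + 4 / fact j * dDelta_norm f \<pi>s \<pi> \<xi> j t \<le> \<eta>"
    and H3: "\<forall>t<T. dDelta_norm f \<pi>s \<pi> \<xi> p t \<le> fact p / (2 * \<mu> ^ p)"
  shows "\<forall>t\<in>{1..T}.
    norm (traj f \<pi>s \<xi> (\<lambda>_. 0) t - traj f \<pi> \<xi> (\<lambda>_. 0) t)
      \<le> Max {\<mu> * (4 / fact j) powr (1 / real p) * dDelta_norm f \<pi>s \<pi> \<xi> j k powr (1 / real p)
              | k j. k < t \<and> j < p}"
proof -
  define M where "M = dev_radius \<mu> p (dDelta_norm f \<pi>s \<pi> \<xi>)"
  define B where "B = policy_gap_bound L \<mu> p"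
  have L: "0 \<le> L"
  proof -
    obtain b :: 'x where "b \<in> Basis" using nonempty_Basis by blast
    moreover have "0 \<le> L / fact (p + 1) * norm (b - 0) ^ (p + 1)"
      using taylor by (meson norm_ge_zero order_trans insertI1)
    ultimately have "0 \<le> L / fact (p + 1)" by simp
    then show ?thesis using pos_le_divide_eq[OF fact_gt_zero, of 0 L "p + 1"] by simp
  qed
  have M_range: "0 \<le> M t \<and> M t \<le> \<alpha> \<and> B (M t) \<le> \<eta>" if t: "1 \<le> t" "t \<le> T" for t
  proof -
    obtain k j where "k < t" "j < p"
      and "M t = \<mu> * (4 / fact j * dDelta_norm f \<pi>s \<pi> \<xi> j k) powr (1 / real p)"
      using dev_radius_attained[OF t(1) p] unfolding M_def by blast
    then show ?thesis
      using H1 H2 t mu p dDelta_norm_nonneg[OF smooth, of j f \<xi> k]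
      by (simp add: B_def policy_gap_bound_root)
  qed
  have "class_K \<gamma>" using ISS unfolding local_dISS_def by simp
  then have budget: "0 \<le> M t \<and> 0 \<le> B (M t) \<and> B (M t) \<le> \<eta> \<and> \<gamma> (B (M t)) \<le> M t"
    if "1 \<le> t" "t \<le> T" for t
    using M_range[OF that] policy_gap_bound_nonneg[OF L mu] ginv_cond
      class_K_le_if_le_ginv[of \<gamma> "M t" "B (M t)"]
    by (auto simp: B_def policy_gap_bound_def)
  have "norm (traj f \<pi>s \<xi> (\<lambda>_. 0) t - traj f \<pi> \<xi> (\<lambda>_. 0) t) \<le> M t" if "1 \<le> t" "t \<le> T" for t
  proof (rule local_dISS_bootstrap[OF ISS xi, where \<pi> = \<pi> and M = M and B = B and T = T])
    show "M k \<le> M t" if "1 \<le> k" "k \<le> t" for k t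
      unfolding M_def using that p by (rule dev_radius_mono)
    show "0 \<le> M t \<and> 0 \<le> B (M t) \<and> B (M t) \<le> \<eta> \<and> \<gamma> (B (M t)) \<le> M t" if "1 \<le> t" "t \<le> T" for t
      using that by (rule budget)
    show "norm (\<pi> (traj f \<pi> \<xi> (\<lambda>_. 0) k) - \<pi>s (traj f \<pi> \<xi> (\<lambda>_. 0) k)) \<le> B (M t)"
      if "1 \<le> t" "t \<le> T" "k < t"
        and "norm (traj f \<pi> \<xi> (\<lambda>_. 0) k - traj f \<pi>s \<xi> (\<lambda>_. 0) k) \<le> M t" for t k
      using traj_policy_gap_le[OF smooth taylor L mu p] M_range[OF that(1,2)] alpha H3 that
      unfolding B_def M_def by auto
  qed (fact that)+
  then show ?thesis unfolding M_def dev_radius_def by auto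
qed

end
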